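(* In the concrete model, for every integer $m\ge1$ with $2m\le M$ and every $u\in\mathbb{C}$, $$T_{2m}(u)=T_{2m-2}(u)-\frac{u}{2}\{\mathbb{S}_{2m},T_{2m-2}(u)\},\qquad \mathbb{S}_{2m}:=h_{2m-1}+h_{2m}+\bar h_{2m+1},$$ where $\{X,Y\}=XY+YX$.
   Context: Concrete model. Fix an integer $M\ge1$ and complex numbers $b_1,\dots,b_M$. Let $h_1,\dots,h_M$ be elements of a unital associative complex algebra satisfying $h_m^2=b_m^2\mathbb{1}$, $h_mh_{m+1}=-h_{m+1}h_m$, $h_mh_{m+2}=-h_{m+2}h_m$, and $h_mh_l=h_lh_m$ for $|l-m|>2$ (e.g. $h_m=b_m\sigma^z_m\sigma^z_{m+1}\sigma^x_{m+2}$ on a spin chain). Set $h_j:=0$, $b_j:=0$ for $j\le 0$ or $j>M$. Let $\beta_3,\beta_5$ be arbitrary complex numbers and define $\beta_{2m+1}:=\beta_{2m-1}/(b_{2m-4}^2\beta_{2m-3}-b_{2m}^2\beta_{2m-1}+1)$ for $m\ge3$ (denominators assumed nonzero). For $2\le m\le\lfloor M/2\rfloor$ put $\bar h_{2m+1}:=\beta_{2m-1}h_{2m-2}h_{2m-3}h_{2m}$ and $\bar b_{2m+1}:=\beta_{2m-1}b_{2m-2}b_{2m-3}b_{2m}$ (so $\bar h_{2m+1}^2=\bar b_{2m+1}^2\mathbb{1}$); otherwise $\bar h_{2m+1}:=0$, $\bar b_{2m+1}:=0$. For $1\le j\le M$, the model of size $j$ (same couplings) has frustration graph $G_j$ with vertices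 $h_1,\dots,h_j$ and $\bar h_{2m+1}$ for $2\le m\le\lfloor j/2\rfloor$, and edges $h_i\sim h_l$ iff $|i-l|\in\{1,2\}$; $\bar h_{2m-1}\sim h_l$ iff $l\in\{2m-7,2m-5,2m-3,2m-1,2m-2,2m\}$; $\bar h_{2m-1}\sim\bar h_{2m'-1}$ iff $|m-m'|=1$ (adjacent vertices anticommute, non-adjacent distinct ones commute). Charges: $Q_j^{(k)}:=\sum_{S}\prod_{v\in S}v$, the sum over independent sets $S$ of $G_j$ of size $k$ ($Q_j^{(0)}=\mathbb{1}$). Hamiltonian $H_j:=Q_j^{(1)}=\sum_{l=1}^j h_l+\sum_{m=2}^{\lfloor j/2\rfloor}\beta_{2m-1}h_{2m-2}h_{2m-3}h_{2m}$. Transfer matrix $T_j(u):=\sum_{k\ge0}(-u)^kQ_j^{(k)}$ for $u\in\mathbb{C}$, with $T_j(u):=\mathbb{1}$ for $j\le 0$. *)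

theory Defs
  imports Complex_Main
begin

text \<open>The unital associative complex algebra is modelled as a type of class ring_1
  together with a unital ring homomorphism emb from the complex numbers into its centre
  (scalar multiplication c x is emb c * x).\<close>

definition is_complex_algebra :: "(complex \<Rightarrow> 'a::ring_1) \<Rightarrow> bool" where
  "is_complex_algebra emb \<longleftrightarrow>
     emb 1 = 1 \<and> (\<forall>x y. emb (x + y) = emb x + emb y) \<and> (\<forall>x y. emb (x * y) = emb x * emb y)
     \<and> (\<forall>c a. emb c * a = a * emb c)"

definition zext :: "nat \<Rightarrow> (nat \<Rightarrow> 'b::zero) \<Rightarrow> nat \<Rightarrow> 'b" where
  "zext M f j = (if 1 \<le> j \<and> j \<le> M then f j else 0)"

text \<open>betaseq M b beta3 beta5 k is beta_(2k+1) (beta_1 unused, set to 0).\<close>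
fun betaseq :: "nat \<Rightarrow> (nat \<Rightarrow> complex) \<Rightarrow> complex \<Rightarrow> complex \<Rightarrow> nat \<Rightarrow> complex" where
  "betaseq M b b3 b5 0 = 0"
| "betaseq M b b3 b5 (Suc 0) = b3"
| "betaseq M b b3 b5 (Suc (Suc 0)) = b5"
| "betaseq M b b3 b5 (Suc (Suc (Suc n))) =
     betaseq M b b3 b5 (n + 2) /
       ((zext M b (2*n + 2))\<^sup>2 * betaseq M b b3 b5 (n + 1)
        - (zext M b (2*n + 6))\<^sup>2 * betaseq M b b3 b5 (n + 2) + 1)"

text \<open>hbar M b h emb b3 b5 m is hbar_(2m+1).\<close>
definition hbar :: "nat \<Rightarrow> (nat \<Rightarrow> complex) \<Rightarrow> (nat \<Rightarrow> 'a::ring_1) \<Rightarrow> (complex \<Rightarrow> 'a)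
                      \<Rightarrow> complex \<Rightarrow> complex \<Rightarrow> nat \<Rightarrow> 'a" where
  "hbar M b h emb b3 b5 m =
     (if 2 \<le> m \<and> m \<le> M div 2
      then emb (betaseq M b b3 b5 (m - 1)) * zext M h (2*m - 2) * zext M h (2*m - 3) * zext M h (2*m)
      else 0)"

text \<open>Vertices of the frustration graph: H l is h_l, HB m is hbar_(2m+1).\<close>
datatype vtx = H nat | HB nat

definition verts :: "nat \<Rightarrow> vtx set" where
  "verts j = H ` {1..j} \<union> HB ` {2..j div 2}"

fun adj :: "vtx \<Rightarrow> vtx \<Rightarrow> bool" where
  "adj (H i) (H l) = (\<bar>int i - int l\<bar> \<in> {1, 2})"
| "adj (HB m) (H l) = (int l \<in> {2*int m - 5, 2*int m - 3, 2*int m - 1, 2*int m + 1, 2*int m, 2*int m + 2})"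
| "adj (H l) (HB m) = (int l \<in> {2*int m - 5, 2*int m - 3, 2*int m - 1, 2*int m + 1, 2*int m, 2*int m + 2})"
| "adj (HB m) (HB m') = (\<bar>int m - int m'\<bar> = 1)"

definition indep_set :: "nat \<Rightarrow> vtx set \<Rightarrow> bool" where
  "indep_set j S \<longleftrightarrow> S \<subseteq> verts j \<and> (\<forall>x\<in>S. \<forall>y\<in>S. \<not> adj x y)"

fun vkey :: "vtx \<Rightarrow> nat" where
  "vkey (H l) = 2 * l"
| "vkey (HB m) = 2 * m + 1"

fun vval :: "nat \<Rightarrow> (nat \<Rightarrow> complex) \<Rightarrow> (nat \<Rightarrow> 'a::ring_1) \<Rightarrow> (complex \<Rightarrow> 'a)
              \<Rightarrow> complex \<Rightarrow> complex \<Rightarrow> vtx \<Rightarrow> 'a" where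
  "vval M b h emb b3 b5 (H l) = zext M h l"
| "vval M b h emb b3 b5 (HB m) = hbar M b h emb b3 b5 m"

text \<open>Product over a set of (pairwise commuting) vertices, taken in a fixed order.\<close>
definition vprod :: "nat \<Rightarrow> (nat \<Rightarrow> complex) \<Rightarrow> (nat \<Rightarrow> 'a::ring_1) \<Rightarrow> (complex \<Rightarrow> 'a)
              \<Rightarrow> complex \<Rightarrow> complex \<Rightarrow> vtx set \<Rightarrow> 'a" where
  "vprod M b h emb b3 b5 S = prod_list (map (vval M b h emb b3 b5) (sorted_key_list_of_set vkey S))"

definition charge :: "nat \<Rightarrow> (nat \<Rightarrow> complex) \<Rightarrow> (nat \<Rightarrow> 'a::ring_1) \<Rightarrow> (complex \<Rightarrow> 'a)
              \<Rightarrow> complex \<Rightarrow> complex \<Rightarrow> nat \<Rightarrow> nat \<Rightarrow> 'a" where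
  "charge M b h emb b3 b5 j k = (\<Sum>S \<in> {S. indep_set j S \<and> card S = k}. vprod M b h emb b3 b5 S)"

definition transfer :: "nat \<Rightarrow> (nat \<Rightarrow> complex) \<Rightarrow> (nat \<Rightarrow> 'a::ring_1) \<Rightarrow> (complex \<Rightarrow> 'a)
              \<Rightarrow> complex \<Rightarrow> complex \<Rightarrow> nat \<Rightarrow> complex \<Rightarrow> 'a" where
  "transfer M b h emb b3 b5 j u =
     (if j = 0 then 1
      else (\<Sum>k \<le> card (verts j). emb ((- u) ^ k) * charge M b h emb b3 b5 j k))"

definition anticomm :: "'a::ring \<Rightarrow> 'a \<Rightarrow> 'a" where
  "anticomm X Y = X * Y + Y * X"

end

theory Submission
  imports Defs
begin

(*
  Passing from G_(2m-2) to G_(2m) adds the vertices h_(2m-1), h_(2m) and hbar_(2m+1), which are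
  pairwise adjacent. So an independent set of G_(2m) is either one of G_(2m-2), or an independent
  set I of G_(2m-2) enlarged by one new vertex v having no neighbour in I; this splits T_(2m) into
  T_(2m-2) plus the terms coming from such pairs (v, I).
  Inside G_(2m-2) the neighbours of each new vertex are again pairwise adjacent, so v has at most
  one neighbour in I. Since adjacent vertices anticommute and the others commute, v commutes with
  the product of I when it has no neighbour there and anticommutes with it otherwise. Hence the
  anticommutator of v with that product is either twice the product of I and v, or 0, and the
  anticommutator of S_(2m) with T_(2m-2) produces exactly the missing terms.
*)

section \<open>Signed commutation and ordered products\<close>

definition commute_sign :: "'a::ring_1 \<Rightarrow> 'a \<Rightarrow> int \<Rightarrow> bool" where
  "commute_sign x y s \<longleftrightarrow> x * y = of_int s * (y * x)"

lemma commute_sign_refl: "commute_sign x x 1"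
  by (simp add: commute_sign_def)

lemma commute_sign_one_right: "commute_sign x 1 1"
  by (simp add: commute_sign_def)

lemma commute_sign_mult_right:
  assumes "commute_sign x y s" and "commute_sign x z t"
  shows "commute_sign x (y * z) (s * t)"
proof -
  have "x * (y * z) = of_int s * y * (x * z)"
    using assms(1) unfolding commute_sign_def by (metis mult.assoc)
  also have "\<dots> = of_int s * (y * of_int t) * (z * x)"
    using assms(2) by (simp add: commute_sign_def mult.assoc)
  also have "\<dots> = of_int (s * t) * (y * z * x)"
    by (simp only: mult_of_int_commute[of t y, symmetric] of_int_mult mult.assoc)
  finally show ?thesis
    by (simp add: commute_sign_def)
qed

lemma commute_sign_swap:
  assumes "commute_sign x y s" and "s * s = 1"
  shows "commute_sign y x s"
proof -
  have "y * x = of_int (s * s) * (y * x)"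
    using assms(2) by simp
  also have "\<dots> = of_int s * (x * y)"
    using assms(1) by (simp add: commute_sign_def mult.assoc)
  finally show ?thesis
    by (simp add: commute_sign_def)
qed

lemma commute_sign_central_right:
  assumes "\<And>a. c * a = a * c" and "commute_sign x y s"
  shows "commute_sign x (c * y) s"
proof -
  have "x * (c * y) = c * (x * y)"
    by (metis assms(1) mult.assoc)
  also have "\<dots> = of_int s * (c * y * x)"
    using assms by (simp add: commute_sign_def mult.assoc)
  finally show ?thesis
    by (simp add: commute_sign_def)
qed

lemma commute_sign_prod_list:
  "(\<And>y. y \<in> set ys \<Longrightarrow> commute_sign x (f y) (s y)) \<Longrightarrow>
     commute_sign x (prod_list (map f ys)) (prod_list (map s ys))"
  by (induction ys) (auto intro: commute_sign_mult_right commute_sign_one_right)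

lemma prod_list_insort_key_commuting:
  fixes f :: "'b \<Rightarrow> 'a::monoid_mult"
  assumes "\<And>y. y \<in> set ys \<Longrightarrow> f x * f y = f y * f x"
  shows "prod_list (map f (insort_key k x ys)) = f x * prod_list (map f ys)"
  using assms
proof (induction ys)
  case (Cons y ys)
  then have "f x * f y = f y * f x" and "prod_list (map f (insort_key k x ys)) = f x * prod_list (map f ys)"
    by simp_all
  then show ?case
    by (simp add: mult.assoc[symmetric])
qed simp

context linorder
begin

lemma
  assumes "inj f"
  shows sorted_key_list_of_set_insert_inj:
      "finite A \<Longrightarrow> x \<notin> A \<Longrightarrow> sorted_key_list_of_set f (insert x A) = insort_key f x (sorted_key_list_of_set f A)"
    and set_sorted_key_list_of_set_inj: "finite A \<Longrightarrow> set (sorted_key_list_of_set f A) = A"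
    and distinct_sorted_key_list_of_set_inj: "distinct (sorted_key_list_of_set f A)"
    and sorted_key_list_of_set_empty_inj: "sorted_key_list_of_set f {} = []"
proof -
  interpret folding_insort_key "(\<le>)" "(<)" UNIV f
    by unfold_locales (use assms in \<open>simp add: inj_on_def inj_def\<close>)
  show "finite A \<Longrightarrow> x \<notin> A \<Longrightarrow> sorted_key_list_of_set f (insert x A) = insort_key f x (sorted_key_list_of_set f A)"
    by (rule sorted_key_list_of_set_insert) auto
  show "finite A \<Longrightarrow> set (sorted_key_list_of_set f A) = A"
    by simp
  show "distinct (sorted_key_list_of_set f A)"
    using distinct_sorted_key_list_of_set[of A] by (simp add: distinct_map)
  show "sorted_key_list_of_set f {} = []"
    by (rule sorted_key_list_of_set_empty)
qed

end

lemma anticomm_sum_left: "anticomm (sum f A) y = (\<Sum>a\<in>A. anticomm (f a) y)"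
  by (simp add: anticomm_def sum_distrib_left sum_distrib_right sum.distrib)

lemma anticomm_sum_right: "anticomm x (sum f A) = (\<Sum>a\<in>A. anticomm x (f a))"
  by (simp add: anticomm_def sum_distrib_left sum_distrib_right sum.distrib)

lemma anticomm_central_right:
  assumes "\<And>a. c * a = a * c"
  shows "anticomm x (c * y) = c * anticomm x y"
  unfolding anticomm_def distrib_left by (metis assms mult.assoc)

lemma prod_sign_at_most_one:
  assumes "finite I" and "\<And>w w'. w \<in> I \<Longrightarrow> w' \<in> I \<Longrightarrow> P w \<Longrightarrow> P w' \<Longrightarrow> w = w'"
  shows "(\<Prod>w\<in>I. if P w then -1 else 1 :: int) = (if \<exists>w\<in>I. P w then -1 else 1)"
proof (cases "\<exists>w\<in>I. P w")
  case True
  then obtain w where w: "w \<in> I" "P w" by blast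
  have "(\<Prod>w\<in>I. if P w then -1 else 1 :: int) = (if P w then -1 else 1) * (\<Prod>w'\<in>I - {w}. if P w' then -1 else 1)"
    using prod.remove[OF assms(1) w(1)] .
  also have "(\<Prod>w'\<in>I - {w}. if P w' then -1 else 1 :: int) = 1"
    using assms(2) w by (intro prod.neutral) (metis Diff_iff insertCI)
  finally show ?thesis using True w by simp
qed simp

section \<open>Independent sets and cliques\<close>

definition independent_sets :: "('v \<Rightarrow> 'v \<Rightarrow> bool) \<Rightarrow> 'v set \<Rightarrow> 'v set set" where
  "independent_sets E V = {S. S \<subseteq> V \<and> (\<forall>x\<in>S. \<forall>y\<in>S. \<not> E x y)}"

definition independent_sets_avoiding :: "('v \<Rightarrow> 'v \<Rightarrow> bool) \<Rightarrow> 'v set \<Rightarrow> 'v \<Rightarrow> 'v set set" where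
  "independent_sets_avoiding E V v = {I \<in> independent_sets E V. \<forall>w\<in>I. \<not> E v w}"

lemma finite_independent_sets: "finite V \<Longrightarrow> finite (independent_sets E V)"
  by (rule finite_subset[of _ "Pow V"]) (auto simp: independent_sets_def)

lemma independent_sets_mono: "V \<subseteq> W \<Longrightarrow> independent_sets E V \<subseteq> independent_sets E W"
  by (auto simp: independent_sets_def)

lemma independent_sets_Un_clique:
  assumes sym: "\<And>x y. E x y \<Longrightarrow> E y x" and irrefl: "\<And>x. \<not> E x x"
    and clique: "\<And>v v'. v \<in> N \<Longrightarrow> v' \<in> N \<Longrightarrow> v \<noteq> v' \<Longrightarrow> E v v'"
  shows "independent_sets E (V \<union> N) =
           independent_sets E V \<union> (\<Union>v\<in>N. insert v ` independent_sets_avoiding E V v)"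
    (is "?L = ?R")
proof
  show "?L \<subseteq> ?R"
  proof
    fix S assume S: "S \<in> ?L"
    show "S \<in> ?R"
    proof (cases "S \<inter> N = {}")
      case True
      with S show ?thesis by (auto simp: independent_sets_def)
    next
      case False
      then obtain v where v: "v \<in> S" "v \<in> N" by blast
      have "x \<in> V" if "x \<in> S" "x \<noteq> v" for x
      proof (rule ccontr)
        assume "x \<notin> V"
        then have "x \<in> N"
          using S that by (auto simp: independent_sets_def)
        with v that clique have "E v x"
          by blast
        then show False
          using S that v by (auto simp: independent_sets_def)
      qed
      then have "S - {v} \<subseteq> V"
        by blast
      then have "S - {v} \<in> independent_sets_avoiding E V v"
        using S v by (auto simp: independent_sets_avoiding_def independent_sets_def)
      then show ?thesis
        using v by (auto intro!: bexI[of _ v] image_eqI[of _ _ "S - {v}"])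
    qed
  qed
  have "insert v I \<in> ?L" if v: "v \<in> N" and I: "I \<in> independent_sets_avoiding E V v" for v I
  proof -
    have "I \<subseteq> V" "\<forall>x\<in>I. \<forall>y\<in>I. \<not> E x y" "\<forall>w\<in>I. \<not> E v w"
      using I by (auto simp: independent_sets_avoiding_def independent_sets_def)
    moreover from this(3) have "\<forall>w\<in>I. \<not> E w v"
      using sym by blast
    ultimately show ?thesis
      using v irrefl by (auto simp: independent_sets_def)
  qed
  then show "?R \<subseteq> ?L"
    using independent_sets_mono[of V "V \<union> N" E] by blast
qed

lemma sum_independent_sets_Un_clique:
  assumes "finite V" "finite N"
    and "\<And>x y. E x y \<Longrightarrow> E y x" "\<And>x. \<not> E x x" and disj: "V \<inter> N = {}"
    and "\<And>v v'. v \<in> N \<Longrightarrow> v' \<in> N \<Longrightarrow> v \<noteq> v' \<Longrightarrow> E v v'"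
  shows "(\<Sum>S\<in>independent_sets E (V \<union> N). f S) =
           (\<Sum>S\<in>independent_sets E V. f S) + (\<Sum>v\<in>N. \<Sum>I\<in>independent_sets_avoiding E V v. f (insert v I))"
proof -
  let ?A = "independent_sets_avoiding E V"
  have sub: "I \<subseteq> V" if "I \<in> ?A v" for I v
    using that by (simp add: independent_sets_avoiding_def independent_sets_def)
  have fin: "finite (?A v)" for v
    using finite_independent_sets[OF assms(1)] by (simp add: independent_sets_avoiding_def)
  have notin: "v \<notin> I" if "v \<in> N" "I \<in> ?A v'" for v v' I
    using sub[OF that(2)] disj that(1) by blast
  have inj: "inj_on (insert v) (?A v)" if "v \<in> N" for v
    using notin[OF that] by (intro inj_onI) (metis Diff_insert_absorb)
  have "(\<Sum>S\<in>independent_sets E (V \<union> N). f S) =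
          (\<Sum>S\<in>independent_sets E V \<union> (\<Union>v\<in>N. insert v ` ?A v). f S)"
    by (rule arg_cong[where f = "sum f"], rule independent_sets_Un_clique; fact assms)
  also have "\<dots> = (\<Sum>S\<in>independent_sets E V. f S) + (\<Sum>S\<in>(\<Union>v\<in>N. insert v ` ?A v). f S)"
  proof (rule sum.union_disjoint)
    show "independent_sets E V \<inter> (\<Union>v\<in>N. insert v ` ?A v) = {}"
      using disj by (auto simp: independent_sets_def)
  qed (use finite_independent_sets[OF assms(1)] assms(2) fin in auto)
  also have "(\<Sum>S\<in>(\<Union>v\<in>N. insert v ` ?A v). f S) = (\<Sum>v\<in>N. \<Sum>S\<in>insert v ` ?A v. f S)"
  proof (rule sum.UNION_disjoint)
    show "\<forall>v\<in>N. \<forall>v'\<in>N. v \<noteq> v' \<longrightarrow> insert v ` ?A v \<inter> insert v' ` ?A v' = {}"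
      using notin by blast
  qed (use assms(2) fin in auto)
  also have "\<dots> = (\<Sum>v\<in>N. \<Sum>I\<in>?A v. f (insert v I))"
    by (rule sum.cong[OF refl]) (simp add: sum.reindex[OF inj])
  finally show ?thesis .
qed

section \<open>The frustration graph\<close>

lemma inj_vkey: "inj vkey"
proof (rule injI)
  fix x y assume "vkey x = vkey y"
  then show "x = y"
    by (cases x; cases y) (simp_all, presburger+)
qed

lemma adj_sym: "adj x y = adj y x"
  by (cases x; cases y) auto

lemma adj_irrefl: "\<not> adj x x"
  by (cases x) auto

lemma indep_set_iff: "indep_set j S \<longleftrightarrow> S \<in> independent_sets adj (verts j)"
  by (simp add: indep_set_def independent_sets_def)

lemma finite_verts: "finite (verts j)"
  by (simp add: verts_def)

lemma verts_mono: "j \<le> j' \<Longrightarrow> verts j \<subseteq> verts j'"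
  unfolding verts_def by (auto intro!: imageI div_le_mono)

lemma mem_verts_iff:
  "w \<in> verts j \<longleftrightarrow> (\<exists>l. w = H l \<and> 1 \<le> l \<and> l \<le> j) \<or> (\<exists>k. w = HB k \<and> 2 \<le> k \<and> k \<le> j div 2)"
  unfolding verts_def by auto

definition new_verts :: "nat \<Rightarrow> vtx set" where
  "new_verts m = {H (2*m - 1), H (2*m)} \<union> (if 2 \<le> m then {HB m} else {})"

lemma verts_double_eq: "1 \<le> m \<Longrightarrow> verts (2*m) = verts (2*m - 2) \<union> new_verts m"
  unfolding verts_def new_verts_def by (auto simp: image_iff)

lemma verts_Int_new_verts: "verts (2*m - 2) \<inter> new_verts m = {}"
  unfolding verts_def new_verts_def by auto

lemma finite_new_verts: "finite (new_verts m)"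
  by (simp add: new_verts_def)

lemma new_verts_clique: "v \<in> new_verts m \<Longrightarrow> v' \<in> new_verts m \<Longrightarrow> v \<noteq> v' \<Longrightarrow> adj v v'"
  by (auto simp: new_verts_def split: if_splits)

lemma neighbours_H_odd:
  "1 \<le> m \<Longrightarrow> w \<in> verts (2*m - 2) \<Longrightarrow> adj (H (2*m - 1)) w \<Longrightarrow> w \<in> {H (2*m - 3), H (2*m - 2), HB (m - 1)}"
  unfolding mem_verts_iff by (elim disjE exE conjE; simp; arith)

lemma neighbours_H_even:
  "1 \<le> m \<Longrightarrow> w \<in> verts (2*m - 2) \<Longrightarrow> adj (H (2*m)) w \<Longrightarrow> w \<in> {H (2*m - 3), H (2*m - 2), HB (m - 1)}"
  unfolding mem_verts_iff by (elim disjE exE conjE; simp; arith)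

lemma neighbours_HB:
  "2 \<le> m \<Longrightarrow> w \<in> verts (2*m - 2) \<Longrightarrow> adj (HB m) w \<Longrightarrow> w \<in> {H (2*m - 5), H (2*m - 3), HB (m - 1)}"
  unfolding mem_verts_iff by (elim disjE exE conjE; simp; arith)

lemma clique_H_neighbours:
  "x \<in> {H (2*m - 3), H (2*m - 2), HB (m - 1)} \<Longrightarrow> y \<in> {H (2*m - 3), H (2*m - 2), HB (m - 1)} \<Longrightarrow>
   x \<in> verts (2*m - 2) \<Longrightarrow> y \<in> verts (2*m - 2) \<Longrightarrow> x \<noteq> y \<Longrightarrow> adj x y"
  by (auto simp: mem_verts_iff)

lemma clique_HB_neighbours:
  "x \<in> {H (2*m - 5), H (2*m - 3), HB (m - 1)} \<Longrightarrow> y \<in> {H (2*m - 5), H (2*m - 3), HB (m - 1)} \<Longrightarrow>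
   x \<in> verts (2*m - 2) \<Longrightarrow> y \<in> verts (2*m - 2) \<Longrightarrow> x \<noteq> y \<Longrightarrow> adj x y"
  by (auto simp: mem_verts_iff)

lemma new_verts_neighbours_clique:
  assumes "1 \<le> m" "v \<in> new_verts m" "w \<in> verts (2*m - 2)" "w' \<in> verts (2*m - 2)"
    and "adj v w" "adj v w'" "w \<noteq> w'"
  shows "adj w w'"
proof -
  consider "v = H (2*m - 1)" | "v = H (2*m)" | "v = HB m" "2 \<le> m"
    using assms(2) by (auto simp: new_verts_def split: if_splits)
  then show ?thesis
  proof cases
    case 1
    then show ?thesis
      using assms neighbours_H_odd clique_H_neighbours by metis
  next
    case 2
    then show ?thesis
      using assms neighbours_H_even clique_H_neighbours by metis
  next
    case 3
    then show ?thesis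
      using assms neighbours_HB clique_HB_neighbours by metis
  qed
qed

definition adj_sign :: "vtx \<Rightarrow> vtx \<Rightarrow> int" where
  "adj_sign x y = (if adj x y then -1 else 1)"

lemma adj_sign_square: "adj_sign x y * adj_sign x y = 1"
  by (simp add: adj_sign_def)

lemma adj_sign_sym: "adj_sign x y = adj_sign y x"
  by (simp add: adj_sign_def adj_sym[of x y])

text \<open>Since hbar_(2k+1) is a multiple of h_(2k-2) h_(2k-3) h_(2k), its adjacency to any vertex has to
  be the parity of the adjacencies of these three factors.\<close>

lemma adj_sign_HB:
  assumes "2 \<le> k"
  shows "adj_sign x (H (2*k - 2)) * adj_sign x (H (2*k - 3)) * adj_sign x (H (2*k)) = adj_sign x (HB k)"
  using assms unfolding adj_sign_def by (cases x) (simp_all; arith)+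

section \<open>The algebra generated by the h_i\<close>

locale chain_model =
  fixes M :: nat and b :: "nat \<Rightarrow> complex" and h :: "nat \<Rightarrow> 'a::ring_1"
    and emb :: "complex \<Rightarrow> 'a" and beta3 beta5 :: complex
  assumes alg: "is_complex_algebra emb"
    and anticomm_next: "\<And>i. 1 \<le> i \<Longrightarrow> i + 1 \<le> M \<Longrightarrow> h i * h (i + 1) = - (h (i + 1) * h i)"
    and anticomm_next2: "\<And>i. 1 \<le> i \<Longrightarrow> i + 2 \<le> M \<Longrightarrow> h i * h (i + 2) = - (h (i + 2) * h i)"
    and commute_far: "\<And>i l. 1 \<le> i \<Longrightarrow> i \<le> M \<Longrightarrow> 1 \<le> l \<Longrightarrow> l \<le> M \<Longrightarrow> i + 2 < l \<Longrightarrow> h i * h l = h l * h i"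
begin

abbreviation vertex :: "vtx \<Rightarrow> 'a" where
  "vertex \<equiv> vval M b h emb beta3 beta5"

abbreviation monomial :: "vtx set \<Rightarrow> 'a" where
  "monomial \<equiv> vprod M b h emb beta3 beta5"

abbreviation T :: "nat \<Rightarrow> complex \<Rightarrow> 'a" where
  "T \<equiv> transfer M b h emb beta3 beta5"

lemma emb_one: "emb 1 = 1"
  and emb_add: "emb (x + y) = emb x + emb y"
  and emb_mult: "emb (x * y) = emb x * emb y"
  and emb_central: "emb c * a = a * emb c"
  using alg unfolding is_complex_algebra_def by blast+

lemma emb_uminus: "emb (- x) = - emb x"
  using emb_add[of x "- x"] emb_add[of 0 0] by (simp add: eq_neg_iff_add_eq_0 add.commute)

lemma emb_two: "emb 2 = 2"
  using emb_add[of 1 1] emb_one by simp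

lemma commute_sign_h_less:
  assumes "1 \<le> l" "l < i" "i \<le> M"
  shows "commute_sign (h l) (h i) (adj_sign (H l) (H i))"
proof -
  consider "i = l + 1" | "i = l + 2" | "l + 2 < i"
    using assms(2) by linarith
  then show ?thesis
  proof cases
    case 1
    then show ?thesis
      using anticomm_next[of l] assms by (simp add: commute_sign_def adj_sign_def)
  next
    case 2
    then show ?thesis
      using anticomm_next2[of l] assms by (simp add: commute_sign_def adj_sign_def)
  next
    case 3
    then show ?thesis
      using commute_far[of l i] assms by (simp add: commute_sign_def adj_sign_def)
  qed
qed

lemma commute_sign_h:
  assumes "1 \<le> l" "l \<le> M" "1 \<le> i" "i \<le> M"
  shows "commute_sign (h l) (h i) (adj_sign (H l) (H i))"
proof -
  consider "l = i" | "l < i" | "i < l"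
    by linarith
  then show ?thesis
  proof cases
    case 1
    then show ?thesis
      using commute_sign_refl by (simp add: adj_sign_def)
  next
    case 2
    then show ?thesis
      using commute_sign_h_less assms by simp
  next
    case 3
    then show ?thesis
      using commute_sign_swap[OF commute_sign_h_less adj_sign_square] adj_sign_sym assms by metis
  qed
qed

lemma hbar_eq:
  assumes "2 \<le> k" "k \<le> M div 2"
  shows "hbar M b h emb beta3 beta5 k = emb (betaseq M b beta3 beta5 (k - 1)) * h (2*k - 2) * h (2*k - 3) * h (2*k)"
proof -
  have "1 \<le> 2*k - 3" "1 \<le> 2*k - 2" "2*k - 3 \<le> M" "2*k - 2 \<le> M" "2*k \<le> M"
    using assms by linarith+
  then show ?thesis
    using assms by (simp add: hbar_def zext_def)
qed

lemma commute_sign_hbar_right: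
  assumes "2 \<le> k" "k \<le> M div 2"
    and "commute_sign x (h (2*k - 2)) s1" "commute_sign x (h (2*k - 3)) s2" "commute_sign x (h (2*k)) s3"
  shows "commute_sign x (hbar M b h emb beta3 beta5 k) (s1 * s2 * s3)"
  unfolding hbar_eq[OF assms(1,2)] mult.assoc[symmetric]
  by (intro commute_sign_mult_right commute_sign_central_right[OF emb_central] assms(3-5))

lemma commute_sign_h_vertex:
  assumes "1 \<le> l" "l \<le> M" "y \<in> verts M"
  shows "commute_sign (h l) (vertex y) (adj_sign (H l) y)"
  using assms(3) unfolding mem_verts_iff
proof (elim disjE exE conjE)
  fix i assume "y = H i" "1 \<le> i" "i \<le> M"
  then show ?thesis
    using commute_sign_h[of l i] assms(1,2) by (simp add: zext_def)
next
  fix k assume y: "y = HB k" "2 \<le> k" "k \<le> M div 2"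
  have "commute_sign (h l) (hbar M b h emb beta3 beta5 k)
          (adj_sign (H l) (H (2*k - 2)) * adj_sign (H l) (H (2*k - 3)) * adj_sign (H l) (H (2*k)))"
    using y assms(1,2) by (intro commute_sign_hbar_right commute_sign_h) auto
  then show ?thesis
    using y adj_sign_HB by simp
qed

lemma commute_sign_vertex:
  assumes "x \<in> verts M" "y \<in> verts M"
  shows "commute_sign (vertex x) (vertex y) (adj_sign x y)"
proof -
  have vertex_h: "commute_sign (vertex x) (h i) (adj_sign x (H i))" if "1 \<le> i" "i \<le> M" for i
    using commute_sign_swap[OF commute_sign_h_vertex[OF that assms(1)] adj_sign_square] adj_sign_sym
    by metis
  show ?thesis
    using assms(2) unfolding mem_verts_iff
  proof (elim disjE exE conjE)
    fix i assume "y = H i" "1 \<le> i" "i \<le> M"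
    then show ?thesis
      using vertex_h by (simp add: zext_def)
  next
    fix k assume y: "y = HB k" "2 \<le> k" "k \<le> M div 2"
    have "commute_sign (vertex x) (hbar M b h emb beta3 beta5 k)
            (adj_sign x (H (2*k - 2)) * adj_sign x (H (2*k - 3)) * adj_sign x (H (2*k)))"
      using y by (intro commute_sign_hbar_right vertex_h) auto
    then show ?thesis
      using y adj_sign_HB by simp
  qed
qed

lemma monomial_empty: "monomial {} = 1"
  by (simp add: vprod_def sorted_key_list_of_set_empty_inj[OF inj_vkey])

lemma monomial_insert:
  assumes "finite I" "v \<notin> I" "\<And>w. w \<in> I \<Longrightarrow> vertex v * vertex w = vertex w * vertex v"
  shows "monomial (insert v I) = vertex v * monomial I"
  unfolding vprod_def sorted_key_list_of_set_insert_inj[OF inj_vkey assms(1,2)]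
  by (rule prod_list_insort_key_commuting) (use assms set_sorted_key_list_of_set_inj[OF inj_vkey] in simp)

lemma commute_sign_monomial:
  assumes "finite I" "\<And>w. w \<in> I \<Longrightarrow> commute_sign x (vertex w) (s w)"
  shows "commute_sign x (monomial I) (\<Prod>w\<in>I. s w)"
proof -
  let ?ws = "sorted_key_list_of_set vkey I"
  have "commute_sign x (monomial I) (prod_list (map s ?ws))"
    unfolding vprod_def
    by (rule commute_sign_prod_list) (use assms set_sorted_key_list_of_set_inj[OF inj_vkey] in simp)
  also have "prod_list (map s ?ws) = (\<Prod>w\<in>I. s w)"
    using prod.distinct_set_conv_list[OF distinct_sorted_key_list_of_set_inj[OF inj_vkey], of s I]
      set_sorted_key_list_of_set_inj[OF inj_vkey assms(1)]
    by simp
  finally show ?thesis .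
qed

lemma transfer_eq_sum_independent_sets:
  "T j u = (\<Sum>S\<in>independent_sets adj (verts j). emb ((- u) ^ card S) * monomial S)"
proof (cases "j = 0")
  case True
  then have "independent_sets adj (verts j) = {{}}"
    by (auto simp: independent_sets_def verts_def)
  then show ?thesis
    using True by (simp add: transfer_def monomial_empty emb_one)
next
  case False
  let ?I = "independent_sets adj (verts j)"
  have "T j u = (\<Sum>k\<le>card (verts j). \<Sum>S\<in>{S \<in> ?I. card S = k}. emb ((- u) ^ card S) * monomial S)"
    unfolding transfer_def charge_def indep_set_iff sum_distrib_left using False by simp
  also have "\<dots> = (\<Sum>S\<in>?I. emb ((- u) ^ card S) * monomial S)"
  proof (rule sum.group)
    show "card ` ?I \<subseteq> {..card (verts j)}"
      using finite_verts by (auto simp: independent_sets_def intro!: card_mono)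
  qed (simp_all add: finite_independent_sets finite_verts)
  finally show ?thesis .
qed

lemma anticomm_vertex_monomial:
  assumes "v \<in> verts M" "I \<in> independent_sets adj (verts M)" "v \<notin> I"
    and one_neighbour: "\<And>w w'. w \<in> I \<Longrightarrow> w' \<in> I \<Longrightarrow> adj v w \<Longrightarrow> adj v w' \<Longrightarrow> w = w'"
  shows "anticomm (vertex v) (monomial I) = (if \<forall>w\<in>I. \<not> adj v w then 2 * monomial (insert v I) else 0)"
proof -
  have I: "finite I" "I \<subseteq> verts M"
    using assms(2) finite_verts by (auto simp: independent_sets_def intro: finite_subset)
  have "commute_sign (vertex v) (monomial I) (\<Prod>w\<in>I. adj_sign v w)"
    using I assms(1) by (intro commute_sign_monomial commute_sign_vertex) auto
  moreover have "(\<Prod>w\<in>I. adj_sign v w) = (if \<exists>w\<in>I. adj v w then -1 else 1)"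
    using prod_sign_at_most_one[of I "adj v", OF I(1) one_neighbour] by (simp add: adj_sign_def)
  ultimately have sign: "commute_sign (vertex v) (monomial I) (if \<exists>w\<in>I. adj v w then -1 else 1)"
    by simp
  show ?thesis
  proof (cases "\<forall>w\<in>I. \<not> adj v w")
    case True
    have "monomial (insert v I) = vertex v * monomial I"
    proof (rule monomial_insert[OF I(1) assms(3)])
      fix w assume "w \<in> I"
      then show "vertex v * vertex w = vertex w * vertex v"
        using commute_sign_vertex[OF assms(1), of w] I(2) True by (auto simp: commute_sign_def adj_sign_def)
    qed
    then show ?thesis
      using True sign by (simp add: anticomm_def commute_sign_def mult_2)
  next
    case False
    then show ?thesis
      using sign by (auto simp: anticomm_def commute_sign_def)
  qed
qed

lemma anticomm_new_vertex_monomial: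
  assumes m: "1 \<le> m" "2*m \<le> M"
    and v: "v \<in> new_verts m" and I: "I \<in> independent_sets adj (verts (2*m - 2))"
  shows "anticomm (vertex v) (monomial I) =
           (if I \<in> independent_sets_avoiding adj (verts (2*m - 2)) v then 2 * monomial (insert v I) else 0)"
proof -
  let ?V = "verts (2*m - 2)"
  have V_M: "?V \<subseteq> verts M" and "new_verts m \<subseteq> verts M"
    using verts_mono[OF m(2)] verts_double_eq[OF m(1)] by auto
  then have "v \<in> verts M" "I \<in> independent_sets adj (verts M)"
    using v I independent_sets_mono[OF V_M] by auto
  moreover have "v \<notin> I"
    using I v verts_Int_new_verts by (auto simp: independent_sets_def)
  moreover have "w = w'" if "w \<in> I" "w' \<in> I" "adj v w" "adj v w'" for w w'
  proof (rule ccontr)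
    assume "w \<noteq> w'"
    moreover have "w \<in> ?V" "w' \<in> ?V"
      using that(1,2) I by (auto simp: independent_sets_def)
    ultimately have "adj w w'"
      using new_verts_neighbours_clique[OF m(1) v] that(3,4) by blast
    then show False
      using that(1,2) I by (auto simp: independent_sets_def)
  qed
  ultimately show ?thesis
    using anticomm_vertex_monomial I by (simp add: independent_sets_avoiding_def)
qed

lemma sum_new_verts:
  assumes "1 \<le> m" "2*m \<le> M"
  shows "zext M h (2*m - 1) + zext M h (2*m) + hbar M b h emb beta3 beta5 m = (\<Sum>v\<in>new_verts m. vertex v)"
proof (cases "2 \<le> m")
  case True
  then show ?thesis
    using assms by (simp add: new_verts_def)
next
  case False
  then show ?thesis
    using assms by (simp add: new_verts_def hbar_def)
qed

lemma transfer_double_step: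
  assumes m: "1 \<le> m" "2*m \<le> M"
  shows "T (2*m) u = T (2*m - 2) u - emb (u/2) * anticomm (\<Sum>v\<in>new_verts m. vertex v) (T (2*m - 2) u)"
proof -
  let ?V = "verts (2*m - 2)" and ?N = "new_verts m"
  let ?I = "independent_sets adj ?V" and ?A = "independent_sets_avoiding adj ?V"
  define f where "f S = emb ((- u) ^ card S) * monomial S" for S
  have T_old: "T (2*m - 2) u = (\<Sum>I\<in>?I. f I)"
    unfolding transfer_eq_sum_independent_sets f_def ..
  have T_new: "T (2*m) u = (\<Sum>I\<in>?I. f I) + (\<Sum>v\<in>?N. \<Sum>I\<in>?A v. f (insert v I))"
    unfolding transfer_eq_sum_independent_sets verts_double_eq[OF m(1)] f_def
    by (rule sum_independent_sets_Un_clique)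
      (use finite_verts finite_new_verts adj_irrefl verts_Int_new_verts new_verts_clique adj_sym in metis)+
  have summand: "emb (u/2) * (emb ((- u) ^ card I) * anticomm (vertex v) (monomial I)) =
                - (if I \<in> ?A v then f (insert v I) else 0)"
    if v: "v \<in> ?N" and I: "I \<in> ?I" for v I
  proof -
    have vI: "v \<notin> I" and fin: "finite I"
      using I v verts_Int_new_verts finite_verts by (auto simp: independent_sets_def intro: finite_subset)
    note ac = anticomm_new_vertex_monomial[OF m v I]
    show ?thesis
    proof (cases "I \<in> ?A v")
      case True
      have "emb (u/2) * (emb ((- u) ^ card I) * anticomm (vertex v) (monomial I)) =
              emb (u/2) * (emb ((- u) ^ card I) * (emb 2 * monomial (insert v I)))"
        using True ac by (simp add: emb_two)
      also have "\<dots> = emb (u/2 * (- u) ^ card I * 2) * monomial (insert v I)"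
        by (simp only: emb_mult mult.assoc)
      also have "u/2 * (- u) ^ card I * 2 = - ((- u) ^ card (insert v I))"
        using vI fin by simp
      finally show ?thesis
        using True by (simp add: f_def emb_uminus)
    qed (use ac in simp)
  qed
  have "emb (u/2) * anticomm (\<Sum>v\<in>?N. vertex v) (T (2*m - 2) u) =
          (\<Sum>v\<in>?N. \<Sum>I\<in>?I. emb (u/2) * (emb ((- u) ^ card I) * anticomm (vertex v) (monomial I)))"
    unfolding T_old f_def
    by (simp add: anticomm_sum_left anticomm_sum_right sum_distrib_left anticomm_central_right[OF emb_central])
      (rule sum.swap)
  also have "\<dots> = (\<Sum>v\<in>?N. \<Sum>I\<in>?I. - (if I \<in> ?A v then f (insert v I) else 0))"
    by (intro sum.cong refl summand)
  also have "\<dots> = - (\<Sum>v\<in>?N. \<Sum>I\<in>?A v. f (insert v I))"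
    by (simp add: sum.inter_filter[OF finite_independent_sets[OF finite_verts]] sum_negf
        independent_sets_avoiding_def)
  finally show ?thesis
    unfolding T_new T_old by simp
qed

end

theorem mainTheorem4:
  fixes M :: nat and b :: "nat \<Rightarrow> complex" and h :: "nat \<Rightarrow> 'a::ring_1"
    and emb :: "complex \<Rightarrow> 'a" and beta3 beta5 :: complex
  assumes alg: "is_complex_algebra emb"
    and M1: "1 \<le> M"
    and sq: "\<And>i. 1 \<le> i \<Longrightarrow> i \<le> M \<Longrightarrow> h i * h i = emb ((b i)\<^sup>2)"
    and ac1: "\<And>i. 1 \<le> i \<Longrightarrow> i + 1 \<le> M \<Longrightarrow> h i * h (i + 1) = - (h (i + 1) * h i)"
    and ac2: "\<And>i. 1 \<le> i \<Longrightarrow> i + 2 \<le> M \<Longrightarrow> h i * h (i + 2) = - (h (i + 2) * h i)"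
    and cm: "\<And>i l. 1 \<le> i \<Longrightarrow> i \<le> M \<Longrightarrow> 1 \<le> l \<Longrightarrow> l \<le> M \<Longrightarrow> i + 2 < l \<Longrightarrow> h i * h l = h l * h i"
    and den: "\<And>k. 3 \<le> k \<Longrightarrow> 2 * k + 1 \<le> M \<Longrightarrow>
               (zext M b (2*k - 4))\<^sup>2 * betaseq M b beta3 beta5 (k - 2)
                 - (zext M b (2*k))\<^sup>2 * betaseq M b beta3 beta5 (k - 1) + 1 \<noteq> 0"
    and m: "1 \<le> m" "2 * m \<le> M"
  shows "transfer M b h emb beta3 beta5 (2*m) u =
           transfer M b h emb beta3 beta5 (2*m - 2) u
           - emb (u / 2) * anticomm (zext M h (2*m - 1) + zext M h (2*m) + hbar M b h emb beta3 beta5 m)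
                                    (transfer M b h emb beta3 beta5 (2*m - 2) u)"
proof -
  interpret chain_model M b h emb beta3 beta5
    by unfold_locales (fact alg ac1 ac2 cm)+
  show ?thesis
    unfolding sum_new_verts[OF m] by (rule transfer_double_step[OF m])
qed

end
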